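(* Let $(G,\mathcal{C})$ be CER with respect to the ordering $(V_{\eta_1},\dots,V_{\eta_r})$, with $2$-path function $m$ computed for this ordering. Then: (1) for every $k\in F$, $\mathrm{BlockDiag}(J^k)=J^k=\mathrm{BlockTri}(J^k)$; (2) for every $k\in[r+R]\setminus F$, $\mathrm{BlockDiag}(J^k)=0$; (3) for all $k,h\in F$ and all $\{v,w\}\in\tilde E$, $[J^kJ^h]_{vw}=m_{v\to w}(k,h)$; (4) if moreover (M2) holds, then for every $i\in[r]$ and all $k,h\in F_i$, $J^kJ^h=J^hJ^k$.
   Context: $G=(V,E)$ finite simple undirected graph, $V=[p]$; coloring: vertex color classes $V_1,\dots,V_r$, edge color classes $E_{r+1},\dots,E_{r+R}$ partitioning $E$. $\tilde E=E\cup\{\{v\}:v\in V\}$, $E_i=\{\{v\}:v\in V_i\}$; $c(v,w)=k$ iff $\{v,w\}\in E_k$, $c(v)=c(v,v)$, $c(v,w)=0$ for non-adjacent distinct $v,w$. $J^k\in\{0,1\}^{p\times p}$ with $J^k_{vw}=1$ iff $c(v,w)=k$. $\pi(v)=i$ iff $v\in V_{\eta_i}$; $V_{\le i}=V_{\eta_1}\cup\dots\cup V_{\eta_i}$. For a $p\times p$ matrix $Y$: $\mathrm{BlockTri}(Y)_{vu}=Y_{vu}$ if $\pi(u)\le\pi(v)$ and $0$ otherwise; $\mathrm{BlockDiag}(Y)_{vu}=Y_{vu}$ if $c(v)=c(u)$ and $0$ otherwise. $m_{v\to w}(k,h)=|\{u\in V_{\le\min(\pi(v),\pi(w))}: c(v,u)=k,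 c(u,w)=h\}|$, $m_{v\leftrightarrow w}(k,h)=m_{v\to w}(k,h)+m_{v\to w}(h,k)$. $F_i=\{c(v,w):\{v,w\}\in\tilde E,\ c(v)=c(w)=i\}$, $F=\bigcup_iF_i$. cpeo: every $v\in V_{\eta_i}$ is simplicial (neighbours form a clique) in $G[V_{\eta_i}\cup\dots\cup V_{\eta_r}]$. (M1): $c(v,w)=c(v',w')$ implies $m_{v\leftrightarrow w}=m_{v'\leftrightarrow w'}$. (M2): $c(v)=c(w)$ implies $m_{v\to w}(k,h)=m_{w\to v}(k,h)$ for all $k,h\in F$. CER with respect to the ordering: it is a cpeo and (M1) holds. *)

theory Defs
  imports "Jordan_Normal_Form.Matrix"
begin

text \<open>Vertices are 0,...,p-1 (the paper's [p], shifted so that they coincide with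
matrix indices). Vertex colours are 1..r, edge colours r+1..r+R.
Edges are two-element subsets of the vertex set.\<close>

definition simple_graph :: "nat \<Rightarrow> nat set set \<Rightarrow> bool" where
  "simple_graph p E \<longleftrightarrow> (\<forall>e\<in>E. \<exists>v w. e = {v, w} \<and> v \<noteq> w \<and> v < p \<and> w < p)"

definition coloured_graph ::
  "nat \<Rightarrow> nat \<Rightarrow> nat \<Rightarrow> nat set set \<Rightarrow> (nat \<Rightarrow> nat) \<Rightarrow> (nat set \<Rightarrow> nat) \<Rightarrow> bool" where
  "coloured_graph p r R E vcol ecol \<longleftrightarrow>
     simple_graph p E \<and>
     (\<forall>v<p. vcol v \<in> {1..r}) \<and>
     (\<forall>e\<in>E. ecol e \<in> {r+1..r+R}) \<and>
     (\<forall>i\<in>{1..r}. \<exists>v<p. vcol v = i) \<and>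
     (\<forall>k\<in>{r+1..r+R}. \<exists>e\<in>E. ecol e = k)"

definition Etilde :: "nat \<Rightarrow> nat set set \<Rightarrow> nat set set" where
  "Etilde p E = E \<union> {{v} | v. v < p}"

definition col :: "nat set set \<Rightarrow> (nat \<Rightarrow> nat) \<Rightarrow> (nat set \<Rightarrow> nat) \<Rightarrow> nat \<Rightarrow> nat \<Rightarrow> nat" where
  "col E vcol ecol v w = (if v = w then vcol v else if {v, w} \<in> E then ecol {v, w} else 0)"

definition Jmat :: "nat \<Rightarrow> nat set set \<Rightarrow> (nat \<Rightarrow> nat) \<Rightarrow> (nat set \<Rightarrow> nat) \<Rightarrow> nat \<Rightarrow> int mat" where
  "Jmat p E vcol ecol k = mat p p (\<lambda>(v, w). if col E vcol ecol v w = k then 1 else 0)"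

definition ordering :: "nat \<Rightarrow> (nat \<Rightarrow> nat) \<Rightarrow> bool" where
  "ordering r \<eta> \<longleftrightarrow> bij_betw \<eta> {1..r} {1..r}"

definition pos :: "nat \<Rightarrow> (nat \<Rightarrow> nat) \<Rightarrow> (nat \<Rightarrow> nat) \<Rightarrow> nat \<Rightarrow> nat" where
  "pos r \<eta> vcol v = the_inv_into {1..r} \<eta> (vcol v)"

definition BlockTri :: "(nat \<Rightarrow> nat) \<Rightarrow> 'a::zero mat \<Rightarrow> 'a mat" where
  "BlockTri \<pi> Y = mat (dim_row Y) (dim_col Y) (\<lambda>(v, u). if \<pi> u \<le> \<pi> v then Y $$ (v, u) else 0)"

definition BlockDiag :: "(nat \<Rightarrow> nat) \<Rightarrow> 'a::zero mat \<Rightarrow> 'a mat" where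
  "BlockDiag vcol Y = mat (dim_row Y) (dim_col Y) (\<lambda>(v, u). if vcol v = vcol u then Y $$ (v, u) else 0)"

definition mto ::
  "nat \<Rightarrow> nat set set \<Rightarrow> (nat \<Rightarrow> nat) \<Rightarrow> (nat set \<Rightarrow> nat) \<Rightarrow> (nat \<Rightarrow> nat)
   \<Rightarrow> nat \<Rightarrow> nat \<Rightarrow> nat \<Rightarrow> nat \<Rightarrow> nat" where
  "mto p E vcol ecol \<pi> v w k h =
     card {u. u < p \<and> \<pi> u \<le> min (\<pi> v) (\<pi> w) \<and> col E vcol ecol v u = k \<and> col E vcol ecol u w = h}"

definition mboth ::
  "nat \<Rightarrow> nat set set \<Rightarrow> (nat \<Rightarrow> nat) \<Rightarrow> (nat set \<Rightarrow> nat) \<Rightarrow> (nat \<Rightarrow> nat)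
   \<Rightarrow> nat \<Rightarrow> nat \<Rightarrow> nat \<Rightarrow> nat \<Rightarrow> nat" where
  "mboth p E vcol ecol \<pi> v w k h = mto p E vcol ecol \<pi> v w k h + mto p E vcol ecol \<pi> v w h k"

definition Fcol :: "nat \<Rightarrow> nat set set \<Rightarrow> (nat \<Rightarrow> nat) \<Rightarrow> (nat set \<Rightarrow> nat) \<Rightarrow> nat \<Rightarrow> nat set" where
  "Fcol p E vcol ecol i =
     {col E vcol ecol v w | v w. v < p \<and> w < p \<and> {v, w} \<in> Etilde p E \<and> vcol v = i \<and> vcol w = i}"

definition Fall :: "nat \<Rightarrow> nat \<Rightarrow> nat set set \<Rightarrow> (nat \<Rightarrow> nat) \<Rightarrow> (nat set \<Rightarrow> nat) \<Rightarrow> nat set" where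
  "Fall p r E vcol ecol = (\<Union>i\<in>{1..r}. Fcol p E vcol ecol i)"

text \<open>cpeo: every v is simplicial in G[V_{\<ge> pi(v)}]\<close>
definition cpeo :: "nat \<Rightarrow> nat set set \<Rightarrow> (nat \<Rightarrow> nat) \<Rightarrow> bool" where
  "cpeo p E \<pi> \<longleftrightarrow>
     (\<forall>v<p. \<forall>u<p. \<forall>w<p. \<pi> v \<le> \<pi> u \<and> \<pi> v \<le> \<pi> w \<and> {v, u} \<in> E \<and> {v, w} \<in> E \<and> u \<noteq> w
        \<longrightarrow> {u, w} \<in> E)"

definition M1 ::
  "nat \<Rightarrow> nat set set \<Rightarrow> (nat \<Rightarrow> nat) \<Rightarrow> (nat set \<Rightarrow> nat) \<Rightarrow> (nat \<Rightarrow> nat) \<Rightarrow> bool" where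
  "M1 p E vcol ecol \<pi> \<longleftrightarrow>
     (\<forall>v<p. \<forall>w<p. \<forall>v'<p. \<forall>w'<p. col E vcol ecol v w = col E vcol ecol v' w' \<longrightarrow>
        mboth p E vcol ecol \<pi> v w = mboth p E vcol ecol \<pi> v' w')"

definition M2 ::
  "nat \<Rightarrow> nat \<Rightarrow> nat set set \<Rightarrow> (nat \<Rightarrow> nat) \<Rightarrow> (nat set \<Rightarrow> nat) \<Rightarrow> (nat \<Rightarrow> nat) \<Rightarrow> bool" where
  "M2 p r E vcol ecol \<pi> \<longleftrightarrow>
     (\<forall>v<p. \<forall>w<p. vcol v = vcol w \<longrightarrow>
        (\<forall>k\<in>Fall p r E vcol ecol. \<forall>h\<in>Fall p r E vcol ecol.
           mto p E vcol ecol \<pi> v w k h = mto p E vcol ecol \<pi> w v k h))"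

definition CER ::
  "nat \<Rightarrow> nat set set \<Rightarrow> (nat \<Rightarrow> nat) \<Rightarrow> (nat set \<Rightarrow> nat) \<Rightarrow> (nat \<Rightarrow> nat) \<Rightarrow> bool" where
  "CER p E vcol ecol \<pi> \<longleftrightarrow> cpeo p E \<pi> \<and> M1 p E vcol ecol \<pi>"

end

theory Submission
  imports Defs
begin

text \<open>The heart of the matter is that under (M1) every colour in F lives inside a single
vertex colour class. If k = c(a,b) with c(a) = c(b) = i, the two 2-paths a \<rightarrow> a \<rightarrow> b and
a \<rightarrow> b \<rightarrow> b give m_{a<->b}(i,k) = 2. Since vertex colours appear only on the diagonal,
m_{v<->w}(i,k) counts at most the endpoints of colour i, so (M1) forces c(v) = c(w) = i
whenever c(v,w) = k. Consequently every 2-path u between v and w with colours in F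
stays in the class of v, where the ordering restriction \<pi>(u) \<le> min(\<pi>(v),\<pi>(w)) is vacuous;
this gives (1) and (3). Commutativity (4) is the symmetry of J^k J^h, which on a class
is exactly (M2) and off the classes holds because both entries vanish.\<close>

definition intra_class ::
  "nat \<Rightarrow> nat set set \<Rightarrow> (nat \<Rightarrow> nat) \<Rightarrow> (nat set \<Rightarrow> nat) \<Rightarrow> nat \<Rightarrow> bool" where
  "intra_class p E vcol ecol k \<longleftrightarrow>
     (\<forall>v<p. \<forall>w<p. col E vcol ecol v w = k \<longrightarrow> vcol v = vcol w)"

lemma intra_classD:
  "intra_class p E vcol ecol k \<Longrightarrow> v < p \<Longrightarrow> w < p \<Longrightarrow> col E vcol ecol v w = k
    \<Longrightarrow> vcol v = vcol w"
  unfolding intra_class_def by blast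

lemma col_commute: "col E vcol ecol v w = col E vcol ecol w v"
  by (auto simp: col_def insert_commute)

lemma col_diag [simp]: "col E vcol ecol v v = vcol v"
  by (simp add: col_def)

lemma col_vertex_colourD:
  assumes "coloured_graph p r R E vcol ecol" and "col E vcol ecol v u = i" and "i \<in> {1..r}"
  shows "u = v \<and> vcol v = i"
proof -
  have "ecol {v, u} > r" if "{v, u} \<in> E"
    using assms(1) that unfolding coloured_graph_def by fastforce
  then show ?thesis
    using assms(2,3) by (auto simp: col_def split: if_splits)
qed

lemma mto_vertex_colour_left:
  assumes "coloured_graph p r R E vcol ecol" and "i \<in> {1..r}"
  shows "mto p E vcol ecol \<pi> v w i k =
    (if v < p \<and> \<pi> v \<le> \<pi> w \<and> vcol v = i \<and> col E vcol ecol v w = k then 1 else 0)"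
proof -
  have "{u. u < p \<and> \<pi> u \<le> min (\<pi> v) (\<pi> w) \<and> col E vcol ecol v u = i \<and> col E vcol ecol u w = k}
      = (if v < p \<and> \<pi> v \<le> \<pi> w \<and> vcol v = i \<and> col E vcol ecol v w = k then {v} else {})"
    using col_vertex_colourD[OF assms(1) _ assms(2), of v] by auto
  then show ?thesis
    unfolding mto_def by simp
qed

lemma mto_swap: "mto p E vcol ecol \<pi> v w k h = mto p E vcol ecol \<pi> w v h k"
  unfolding mto_def by (metis (no_types, opaque_lifting) col_commute min.commute)

lemma mto_vertex_colour_right:
  assumes "coloured_graph p r R E vcol ecol" and "i \<in> {1..r}"
  shows "mto p E vcol ecol \<pi> v w k i =
    (if w < p \<and> \<pi> w \<le> \<pi> v \<and> vcol w = i \<and> col E vcol ecol v w = k then 1 else 0)"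
  using mto_vertex_colour_left[OF assms] by (simp add: mto_swap[of _ _ _ _ _ v] col_commute[of _ _ _ v])

lemma Fall_intra_class:
  assumes cg: "coloured_graph p r R E vcol ecol" and m1: "M1 p E vcol ecol \<pi>"
    and \<pi>: "\<pi> = \<rho> \<circ> vcol"
    and k: "k \<in> Fall p r E vcol ecol"
  shows "intra_class p E vcol ecol k"
  unfolding intra_class_def
proof (intro allI impI)
  fix v w assume v: "v < p" and w: "w < p" and vw: "col E vcol ecol v w = k"
  obtain i a b where i: "i \<in> {1..r}" and ab: "a < p" "b < p" "vcol a = i" "vcol b = i"
    and k_ab: "col E vcol ecol a b = k"
    using k unfolding Fall_def Fcol_def by blast
  note mboth_i = mboth_def mto_vertex_colour_left[OF cg i] mto_vertex_colour_right[OF cg i]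
  have "mboth p E vcol ecol \<pi> a b i k = 2"
    using ab k_ab by (simp add: mboth_i \<pi>)
  moreover have "mboth p E vcol ecol \<pi> a b = mboth p E vcol ecol \<pi> v w"
    using m1 ab(1,2) v w k_ab vw unfolding M1_def by metis
  ultimately have "mboth p E vcol ecol \<pi> v w i k = 2"
    by simp
  then have "vcol v = i \<and> vcol w = i"
    by (simp add: mboth_i split: if_splits)
  then show "vcol v = vcol w"
    by simp
qed

lemma col_in_Fall:
  assumes cg: "coloured_graph p r R E vcol ecol" and "v < p" "w < p" "vcol v = vcol w"
    and "col E vcol ecol v w \<noteq> 0"
  shows "col E vcol ecol v w \<in> Fall p r E vcol ecol"
proof -
  have "{v, w} \<in> Etilde p E"
    using assms(2,5) by (auto simp: Etilde_def col_def split: if_splits)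
  then have "col E vcol ecol v w \<in> Fcol p E vcol ecol (vcol v)"
    using assms(2-4) unfolding Fcol_def by force
  moreover have "vcol v \<in> {1..r}"
    using cg assms(2) unfolding coloured_graph_def by blast
  ultimately show ?thesis
    unfolding Fall_def by blast
qed

lemma dim_Jmat [simp]:
  "dim_row (Jmat p E vcol ecol k) = p" "dim_col (Jmat p E vcol ecol k) = p"
  by (simp_all add: Jmat_def)

lemma index_Jmat:
  "v < p \<Longrightarrow> w < p \<Longrightarrow>
    Jmat p E vcol ecol k $$ (v, w) = (if col E vcol ecol v w = k then 1 else 0)"
  by (simp add: Jmat_def)

lemma transpose_Jmat: "transpose_mat (Jmat p E vcol ecol k) = Jmat p E vcol ecol k"
  by (rule eq_matI) (auto simp: index_Jmat col_commute)

lemma index_mult_Jmat: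
  assumes "v < p" "w < p"
  shows "(Jmat p E vcol ecol k * Jmat p E vcol ecol h) $$ (v, w)
     = int (card {u. u < p \<and> col E vcol ecol v u = k \<and> col E vcol ecol u w = h})"
proof -
  have "(Jmat p E vcol ecol k * Jmat p E vcol ecol h) $$ (v, w)
      = (\<Sum>u\<in>{0..<p}. if col E vcol ecol v u = k \<and> col E vcol ecol u w = h then 1 else 0)"
    using assms by (auto simp: index_Jmat scalar_prod_def intro!: sum.cong)
  also have "\<dots> = int (card ({0..<p} \<inter> {u. col E vcol ecol v u = k \<and> col E vcol ecol u w = h}))"
    by (simp add: sum.If_cases)
  finally show ?thesis
    by (simp add: Int_def conj_commute)
qed

lemma index_mult_Jmat_mto:
  assumes "intra_class p E vcol ecol k" "intra_class p E vcol ecol h"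
    and \<pi>: "\<pi> = \<rho> \<circ> vcol"
    and "v < p" "w < p"
  shows "(Jmat p E vcol ecol k * Jmat p E vcol ecol h) $$ (v, w)
     = int (mto p E vcol ecol \<pi> v w k h)"
proof -
  have "\<pi> u \<le> min (\<pi> v) (\<pi> w)"
    if "u < p" "col E vcol ecol v u = k" "col E vcol ecol u w = h" for u
    using intra_classD[OF assms(1) _ that(1,2)] intra_classD[OF assms(2) that(1) _ that(3)]
      assms(4,5) by (simp add: \<pi>)
  then have "{u. u < p \<and> col E vcol ecol v u = k \<and> col E vcol ecol u w = h}
      = {u. u < p \<and> \<pi> u \<le> min (\<pi> v) (\<pi> w) \<and> col E vcol ecol v u = k \<and> col E vcol ecol u w = h}"
    by blast
  then show ?thesis
    using index_mult_Jmat[OF assms(4,5)] unfolding mto_def by simp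
qed

lemma mto_eq_0_if_vcol_neq:
  assumes "intra_class p E vcol ecol k" "intra_class p E vcol ecol h"
    and "v < p" "w < p" "vcol v \<noteq> vcol w"
  shows "mto p E vcol ecol \<pi> v w k h = 0"
proof -
  have "vcol v = vcol w"
    if "u < p" "col E vcol ecol v u = k" "col E vcol ecol u w = h" for u
    using intra_classD[OF assms(1) assms(3) that(1,2)] intra_classD[OF assms(2) that(1) assms(4) that(3)]
    by simp
  then show ?thesis
    using assms(5) unfolding mto_def by auto
qed

lemma BlockDiag_Jmat:
  "intra_class p E vcol ecol k \<Longrightarrow> BlockDiag vcol (Jmat p E vcol ecol k) = Jmat p E vcol ecol k"
  by (rule eq_matI) (auto simp: BlockDiag_def index_Jmat dest: intra_classD)

lemma BlockTri_Jmat: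
  assumes "intra_class p E vcol ecol k" and "\<pi> = \<rho> \<circ> vcol"
  shows "BlockTri \<pi> (Jmat p E vcol ecol k) = Jmat p E vcol ecol k"
  by (rule eq_matI) (auto simp: BlockTri_def index_Jmat assms(2) dest: intra_classD[OF assms(1)])

lemma BlockDiag_Jmat_eq_0:
  assumes "coloured_graph p r R E vcol ecol" and "k \<noteq> 0" and "k \<notin> Fall p r E vcol ecol"
  shows "BlockDiag vcol (Jmat p E vcol ecol k) = 0\<^sub>m p p"
  by (rule eq_matI) (use col_in_Fall[OF assms(1)] assms(2,3) in \<open>auto simp: BlockDiag_def index_Jmat\<close>)

lemma Jmat_mult_commute:
  assumes k: "intra_class p E vcol ecol k" and h: "intra_class p E vcol ecol h"
    and \<pi>: "\<pi> = \<rho> \<circ> vcol"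
    and sym: "\<And>v w. v < p \<Longrightarrow> w < p \<Longrightarrow> vcol v = vcol w \<Longrightarrow>
      mto p E vcol ecol \<pi> v w k h = mto p E vcol ecol \<pi> w v k h"
  shows "Jmat p E vcol ecol k * Jmat p E vcol ecol h = Jmat p E vcol ecol h * Jmat p E vcol ecol k"
proof (rule eq_matI)
  let ?J = "Jmat p E vcol ecol"
  fix v w assume "v < dim_row (?J h * ?J k)" "w < dim_col (?J h * ?J k)"
  then have v: "v < p" and w: "w < p"
    by simp_all
  have "mto p E vcol ecol \<pi> v w k h = mto p E vcol ecol \<pi> w v k h"
    using sym[OF v w] mto_eq_0_if_vcol_neq[OF k h] v w by metis
  then have "(?J k * ?J h) $$ (v, w) = (?J k * ?J h) $$ (w, v)"
    unfolding index_mult_Jmat_mto[OF k h \<pi> v w] index_mult_Jmat_mto[OF k h \<pi> w v] by simp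
  also have "\<dots> = transpose_mat (?J k * ?J h) $$ (v, w)"
    using v w by simp
  also have "transpose_mat (?J k * ?J h) = ?J h * ?J k"
    using transpose_mult[of "?J k" p p "?J h" p] by (simp add: carrier_matI transpose_Jmat)
  finally show "(?J k * ?J h) $$ (v, w) = (?J h * ?J k) $$ (v, w)" .
qed simp_all

theorem proposition7p5:
  fixes p r R :: nat and E :: "nat set set" and vcol :: "nat \<Rightarrow> nat"
    and ecol :: "nat set \<Rightarrow> nat" and \<eta> :: "nat \<Rightarrow> nat"
  defines "\<pi> \<equiv> pos r \<eta> vcol"
  defines "J \<equiv> Jmat p E vcol ecol"
  defines "F \<equiv> Fall p r E vcol ecol"
  defines "m \<equiv> mto p E vcol ecol \<pi>"
  assumes "coloured_graph p r R E vcol ecol"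
    and "ordering r \<eta>"
    and "CER p E vcol ecol \<pi>"
  shows "(\<forall>k\<in>F. BlockDiag vcol (J k) = J k \<and> J k = BlockTri \<pi> (J k)) \<and>
         (\<forall>k\<in>{1..r+R} - F. BlockDiag vcol (J k) = 0\<^sub>m p p) \<and>
         (\<forall>k\<in>F. \<forall>h\<in>F. \<forall>v<p. \<forall>w<p. {v, w} \<in> Etilde p E \<longrightarrow>
            (J k * J h) $$ (v, w) = int (m v w k h)) \<and>
         (M2 p r E vcol ecol \<pi> \<longrightarrow>
           (\<forall>i\<in>{1..r}. \<forall>k\<in>Fcol p E vcol ecol i. \<forall>h\<in>Fcol p E vcol ecol i.
              J k * J h = J h * J k))"
proof -
  note cg = \<open>coloured_graph p r R E vcol ecol\<close>
  have m1: "M1 p E vcol ecol \<pi>"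
    using \<open>CER p E vcol ecol \<pi>\<close> unfolding CER_def by blast
  have \<pi>: "\<pi> = the_inv_into {1..r} \<eta> \<circ> vcol"
    by (simp add: \<pi>_def pos_def fun_eq_iff)
  have intra: "intra_class p E vcol ecol k" if "k \<in> F" for k
    using Fall_intra_class[OF cg m1 \<pi>] that unfolding F_def .
  have "BlockDiag vcol (J k) = J k \<and> J k = BlockTri \<pi> (J k)" if "k \<in> F" for k
    unfolding J_def using BlockDiag_Jmat BlockTri_Jmat[OF _ \<pi>] intra[OF that] by metis
  moreover have "BlockDiag vcol (J k) = 0\<^sub>m p p" if "k \<in> {1..r+R} - F" for k
    unfolding J_def using BlockDiag_Jmat_eq_0[OF cg] that unfolding F_def by simp
  moreover have "(J k * J h) $$ (v, w) = int (m v w k h)"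
    if "k \<in> F" "h \<in> F" "v < p" "w < p" for k h v w
    unfolding J_def m_def using index_mult_Jmat_mto[OF intra intra \<pi>] that .
  moreover have "J k * J h = J h * J k"
    if "M2 p r E vcol ecol \<pi>" "i \<in> {1..r}" "k \<in> Fcol p E vcol ecol i" "h \<in> Fcol p E vcol ecol i"
    for i k h
  proof -
    have "k \<in> F" "h \<in> F"
      using that(2-4) unfolding F_def Fall_def by blast+
    moreover have "mto p E vcol ecol \<pi> v w k h = mto p E vcol ecol \<pi> w v k h"
      if "v < p" "w < p" "vcol v = vcol w" for v w
      using \<open>M2 p r E vcol ecol \<pi>\<close> \<open>k \<in> F\<close> \<open>h \<in> F\<close> that unfolding M2_def F_def by blast
    ultimately show ?thesis
      unfolding J_def by (intro Jmat_mult_commute[OF intra intra \<pi>])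
  qed
  ultimately show ?thesis
    by blast
qed

end
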